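(* Let $E\in(-2,2)$, $k=\arccos(-E/2)\in(0,\pi)$, let $w_\sigma$ be a compactly supported real random variable on a probability space $(\Sigma,\mathbb P)$, let $\delta\in\mathbb R$, and let $$T^{\epsilon,\delta}_\sigma=\begin{pmatrix}e^{-\imath k}&0\\0&e^{\imath k}\end{pmatrix}\exp\Big[\frac{\imath\delta+\epsilon w_\sigma}{2\sin(k)}(B_2+B_3)\Big].$$ If $\epsilon\ne0$ and the support of $w_\sigma$ contains more than one point, then the support of $T^{\epsilon,\delta}_\sigma$ is strongly irreducible, i.e. every finite set $F\subset\overline{\mathbb C}$ satisfies $\mathrm{supp}(T^{\epsilon,\delta}_\sigma)\cdot F\not\subset F$.
   Context: $B_2=\begin{pmatrix}0&\imath\\-\imath&0\end{pmatrix}$, $B_3=\begin{pmatrix}\imath&0\\0&-\imath\end{pmatrix}$. For $T=\begin{pmatrix}a&b\\c&d\end{pmatrix}$ with $\det T=1$, the Möbius action on $\overline{\mathbb C}=\mathbb C\cup\{\infty\}$ is $T\cdot z=\frac{az+b}{cz+d}$; $\mathrm{supp}(T^{\epsilon,\delta}_\sigma)$ is the support of the distribution of the random matrix, and $\mathrm{supp}(T^{\epsilon,\delta}_\sigma)\cdot F=\{T\cdot z:T\in\mathrm{supp}(T^{\epsilon,\delta}_\sigma),z\in F\}$. (These matrices are the single-site Anderson transfer matrices at energy $E+\epsilon(\cdot)-\imath\delta$ after the basis change to $\mathrm{SU}(1,1)$ form.) *)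

theory Defs
  imports "HOL-Probability.Probability"
begin

definition msupport :: "'a::topological_space measure \<Rightarrow> 'a set" where
  "msupport N = {x. \<forall>U. open U \<longrightarrow> x \<in> U \<longrightarrow> emeasure N U > 0}"

type_synonym cmat2 = "complex^2^2"

definition cmscale :: "complex \<Rightarrow> cmat2 \<Rightarrow> cmat2" where
  "cmscale c A = (\<chi> i j. c * A $ i $ j)"

fun mpow :: "cmat2 \<Rightarrow> nat \<Rightarrow> cmat2" where
  "mpow A 0 = mat 1"
| "mpow A (Suc n) = A ** mpow A n"

definition mexp :: "cmat2 \<Rightarrow> cmat2" where
  "mexp A = (\<Sum>n. (1 / fact n) *\<^sub>R mpow A n)"

definition mk2 :: "complex \<Rightarrow> complex \<Rightarrow> complex \<Rightarrow> complex \<Rightarrow> cmat2" where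
  "mk2 a b c d = vector [vector [a, b], vector [c, d]]"

definition B2 :: cmat2 where "B2 = mk2 0 \<i> (-\<i>) 0"
definition B3 :: cmat2 where "B3 = mk2 \<i> 0 0 (-\<i>)"

text \<open>Extended complex plane: None = \<infinity>. Moebius action.\<close>
fun mob_act :: "cmat2 \<Rightarrow> complex option \<Rightarrow> complex option" where
  "mob_act T (Some z) =
     (if T$2$1 * z + T$2$2 = 0 then None
      else Some ((T$1$1 * z + T$1$2) / (T$2$1 * z + T$2$2)))"
| "mob_act T None = (if T$2$1 = 0 then None else Some (T$1$1 / T$2$1))"

definition transfer :: "real \<Rightarrow> real \<Rightarrow> real \<Rightarrow> real \<Rightarrow> cmat2" where
  "transfer E \<epsilon> \<delta> w =
     (let k = arccos (- E / 2) in
      mk2 (cis (-k)) 0 0 (cis k) **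
      mexp (cmscale ((\<i> * complex_of_real \<delta> + complex_of_real (\<epsilon> * w)) / complex_of_real (2 * sin k))
                    (B2 + B3)))"

end

theory Submission
  imports Defs
begin

(*
  The transfer matrix factors as diag(q, r) exp(c N) with q = e^{-ik}, r = e^{ik} and
  N = B2 + B3 nilpotent, so exp(c N) = I + c N. In the coordinate y = 1/(z + 1) the factor
  I + c N acts on the Riemann sphere as the translation y \<mapsto> y - i c, while diag(q, r) is
  z \<mapsto> q^2 z. Let F be a finite set invariant under the matrices of two distinct points
  a, b of the support of w; since epsilon \<noteq> 0 they have distinct parameters c_a, c_b.
  Being injective, the map of b permutes F, so composing the map of a with its inverse
  translates the finite part of y(F) by i (c_b - c_a) \<noteq> 0. Hence y(F) = {\<infinity>}, i.e. F = {-1}.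
  But -1 is mapped to -q^2 = -e^{-2ik} \<noteq> -1 because 0 < k < pi.
  Only two points of the support are used: neither the normalisation of the measure nor the
  compactness of the support plays a role.
*)

lemma mk2_nth [simp]:
  "mk2 a b c d $ 1 $ 1 = a" "mk2 a b c d $ 1 $ 2 = b" "mk2 a b c d $ 2 $ 1 = c" "mk2 a b c d $ 2 $ 2 = d"
  by (simp_all add: mk2_def)

lemma mpow_eq_0_if_square_eq_0:
  assumes "X ** X = 0"
  shows "mpow X (Suc (Suc n)) = 0"
proof -
  have "mpow X (Suc (Suc n)) = (X ** X) ** mpow X n"
    by (simp add: matrix_mul_assoc)
  with assms show ?thesis
    by (simp add: vec_eq_iff matrix_matrix_mult_def)
qed

lemma mexp_eq_if_square_eq_0:
  assumes "X ** X = 0"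
  shows "mexp X = mat 1 + X"
proof -
  have "mexp X = (\<Sum>n\<in>{0, 1}. (1 / fact n) *\<^sub>R mpow X n)"
    unfolding mexp_def
  proof (rule suminf_finite)
    fix n :: nat
    assume "n \<notin> {0, 1}"
    then obtain m where "n = Suc (Suc m)"
      by (metis insertCI not0_implies_Suc One_nat_def)
    then show "(1 / fact n) *\<^sub>R mpow X n = 0"
      using mpow_eq_0_if_square_eq_0[OF assms] by simp
  qed simp
  then show ?thesis
    by (simp add: matrix_mul_rid)
qed

definition transfer_matrix :: "complex \<Rightarrow> complex \<Rightarrow> complex \<Rightarrow> cmat2" where
  "transfer_matrix q r c =
     mk2 (q * (1 + \<i> * c)) (q * (\<i> * c)) (- (r * (\<i> * c))) (r * (1 - \<i> * c))"

lemma diag_mult_mexp_B2_B3: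
  "mk2 q 0 0 r ** mexp (cmscale c (B2 + B3)) = transfer_matrix q r c"
proof -
  have "cmscale c (B2 + B3) ** cmscale c (B2 + B3) = 0"
    by (simp add: vec_eq_iff forall_2 matrix_matrix_mult_def sum_2 B2_def B3_def cmscale_def)
  then show ?thesis
    by (simp add: mexp_eq_if_square_eq_0 vec_eq_iff forall_2 matrix_matrix_mult_def sum_2
        B2_def B3_def transfer_matrix_def cmscale_def mat_def)
qed

lemma continuous_on_transfer_matrix: "continuous_on UNIV (transfer_matrix q r)"
proof -
  have "continuous_on UNIV (\<lambda>c. transfer_matrix q r c $ i $ j)" for i j
    using exhaust_2[of i] exhaust_2[of j]
    by (elim disjE; simp add: transfer_matrix_def; intro continuous_intros)
  then have "continuous_on UNIV (\<lambda>c. \<chi> i j. transfer_matrix q r c $ i $ j)"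
    by (intro continuous_on_vec_lambda)
  then show ?thesis
    by simp
qed

lemma continuous_on_transfer: "continuous_on UNIV (transfer E \<epsilon> \<delta>)"
  unfolding transfer_def Let_def diag_mult_mexp_B2_B3 divide_inverse
  by (intro continuous_on_compose2[OF continuous_on_transfer_matrix] continuous_intros) auto

text \<open>The coordinate \<open>y = 1/(z + 1)\<close>, in which \<^term>\<open>B2 + B3\<close> generates translations.\<close>

fun ext_recip_succ :: "complex option \<Rightarrow> complex option" where
  "ext_recip_succ None = Some 0"
| "ext_recip_succ (Some z) = (if z = -1 then None else Some (1 / (z + 1)))"

fun ext_translate :: "complex \<Rightarrow> complex option \<Rightarrow> complex option" where
  "ext_translate s None = None"
| "ext_translate s (Some v) = Some (v + s)"

fun ext_dilate_recip_pred :: "complex \<Rightarrow> complex option \<Rightarrow> complex option" where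
  "ext_dilate_recip_pred a None = Some (- a)"
| "ext_dilate_recip_pred a (Some v) = (if v = 0 then None else Some (a * (1 / v - 1)))"

lemma ext_recip_succ_eq_None_iff: "ext_recip_succ p = None \<longleftrightarrow> p = Some (- 1)"
  by (cases p) auto

lemma inj_ext_recip_succ: "inj ext_recip_succ"
proof (rule injI)
  fix x y
  assume "ext_recip_succ x = ext_recip_succ y"
  then show "x = y"
    by (cases x; cases y) (auto split: if_splits simp: field_simps add_eq_0_iff2)
qed

lemma inj_ext_translate: "inj (ext_translate s)"
proof (rule injI)
  fix x y
  assume "ext_translate s x = ext_translate s y"
  then show "x = y"
    by (cases x; cases y) auto
qed

lemma inj_ext_dilate_recip_pred:
  assumes "a \<noteq> 0"
  shows "inj (ext_dilate_recip_pred a)"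
proof (rule injI)
  fix x y
  assume "ext_dilate_recip_pred a x = ext_dilate_recip_pred a y"
  with assms show "x = y"
    by (cases x; cases y) (auto split: if_splits simp: field_simps)
qed

lemma mob_act_transfer_matrix:
  assumes "q * r = 1"
  shows "mob_act (transfer_matrix q r c) =
           ext_dilate_recip_pred (q\<^sup>2) \<circ> ext_translate (- (\<i> * c)) \<circ> ext_recip_succ"
proof
  fix p
  have "q \<noteq> 0"
    using assms by auto
  then have "r \<noteq> 0" and r: "r = 1 / q"
    using assms by (auto simp: field_simps)
  show "mob_act (transfer_matrix q r c) p =
          (ext_dilate_recip_pred (q\<^sup>2) \<circ> ext_translate (- (\<i> * c)) \<circ> ext_recip_succ) p"
  proof (cases "p = None \<or> p = Some (- 1)")
    case True
    with \<open>r \<noteq> 0\<close> show ?thesis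
      unfolding r by (auto simp: transfer_matrix_def field_simps power2_eq_square)
  next
    case False
    then obtain z where "z + 1 \<noteq> 0" and "p = Some z"
      by (cases p) (auto simp: add_eq_0_iff2)
    then obtain y where "y \<noteq> 0" and "p = Some (1 / y - 1)"
      by (intro that[of "1 / (z + 1)"]) (auto simp: field_simps)
    with \<open>r \<noteq> 0\<close> show ?thesis
      unfolding r
      by (cases "y = \<i> * c") (auto simp: transfer_matrix_def field_simps power2_eq_square)
  qed
qed

lemma finite_translation_closed_eq_empty:
  fixes S :: "'a :: {idom, ring_char_0} set"
  assumes "finite S" and "d \<noteq> 0" and closed: "\<And>v. v \<in> S \<Longrightarrow> v + d \<in> S"
  shows "S = {}"
proof (rule ccontr)
  assume "S \<noteq> {}"
  then obtain v where "v \<in> S"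
    by blast
  have orbit: "v + of_nat n * d \<in> S" for n
  proof (induction n)
    case 0
    show ?case using \<open>v \<in> S\<close> by simp
  next
    case (Suc n)
    then have "v + of_nat n * d + d \<in> S"
      by (rule closed)
    then show ?case
      by (simp add: algebra_simps)
  qed
  have "inj (\<lambda>n. v + of_nat n * d)"
    using \<open>d \<noteq> 0\<close> by (auto simp: inj_def)
  with orbit \<open>finite S\<close> show False
    by (metis finite_subset image_subsetI range_inj_infinite)
qed

lemma finite_invariant_imp_dilation_eq_1:
  fixes F :: "complex option set"
  assumes "finite F" and "F \<noteq> {}" and "a \<noteq> 0" and "s \<noteq> t"
    and inv_s: "(ext_dilate_recip_pred a \<circ> ext_translate s \<circ> ext_recip_succ) ` F \<subseteq> F"
    and inv_t: "(ext_dilate_recip_pred a \<circ> ext_translate t \<circ> ext_recip_succ) ` F \<subseteq> F"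
  shows "a = 1"
proof -
  let ?G = "\<lambda>s. ext_dilate_recip_pred a \<circ> ext_translate s \<circ> ext_recip_succ"
  have "inj (?G t)"
    using inj_ext_dilate_recip_pred[OF \<open>a \<noteq> 0\<close>] inj_ext_translate inj_ext_recip_succ
    by (intro inj_compose)
  then have onto_t: "?G t ` F = F"
    using endo_inj_surj[OF \<open>finite F\<close> inv_t] inj_on_subset by blast
  define S where "S = Some -` ext_recip_succ ` F"
  have "S = {}"
  proof (rule finite_translation_closed_eq_empty)
    show "finite S"
      unfolding S_def using \<open>finite F\<close> by (intro finite_vimageI) auto
    show "s - t \<noteq> 0"
      using \<open>s \<noteq> t\<close> by simp
    fix v
    assume "v \<in> S"
    then obtain p where "p \<in> F" and p: "ext_recip_succ p = Some v"
      unfolding S_def by auto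
    then obtain p' where "p' \<in> F" and "?G s p = ?G t p'"
      using inv_s onto_t by blast
    then have "ext_translate s (ext_recip_succ p) = ext_translate t (ext_recip_succ p')"
      by (simp only: comp_apply inj_eq[OF inj_ext_dilate_recip_pred[OF \<open>a \<noteq> 0\<close>]])
    then have "ext_recip_succ p' = Some (v + (s - t))"
      using p by (cases "ext_recip_succ p'") (auto simp: algebra_simps)
    with \<open>p' \<in> F\<close> show "v + (s - t) \<in> S"
      unfolding S_def by (metis imageI vimageI2)
  qed
  have "ext_recip_succ p = None" if "p \<in> F" for p
    using that \<open>S = {}\<close> unfolding S_def by (metis empty_iff imageI not_None_eq vimageI2)
  then have "F \<subseteq> {Some (- 1)}"
    by (auto simp: ext_recip_succ_eq_None_iff)
  with \<open>F \<noteq> {}\<close> have "Some (- 1) \<in> F"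
    by blast
  then have "?G s (Some (- 1)) \<in> F"
    using inv_s by blast
  with \<open>F \<subseteq> {Some (- 1)}\<close> show "a = 1"
    by auto
qed

lemma continuous_image_msupport_distr:
  fixes w :: "'s \<Rightarrow> 'a :: topological_space" and g :: "'a \<Rightarrow> 'b :: topological_space"
  assumes w: "w \<in> borel_measurable M" and g: "continuous_on UNIV g"
  shows "g ` msupport (distr M borel w) \<subseteq> msupport (distr M borel (\<lambda>s. g (w s)))"
proof (clarsimp simp: msupport_def)
  fix x U
  assume x: "\<forall>U. open U \<longrightarrow> x \<in> U \<longrightarrow> 0 < emeasure (distr M borel w) U"
    and U: "open U" "g x \<in> U"
  have gw: "(\<lambda>s. g (w s)) \<in> borel_measurable M"
    using measurable_compose[OF w borel_measurable_continuous_onI[OF g]] by (simp add: o_def)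
  have V: "open (g -` U)"
    using g U(1) by (simp add: continuous_on_open_vimage)
  have "emeasure (distr M borel (\<lambda>s. g (w s))) U = emeasure M (w -` (g -` U) \<inter> space M)"
    using gw U(1) by (simp add: emeasure_distr vimage_def)
  also have "\<dots> = emeasure (distr M borel w) (g -` U)"
    using w V by (simp add: emeasure_distr)
  finally show "0 < emeasure (distr M borel (\<lambda>s. g (w s))) U"
    using x V U(2) by simp
qed

theorem proposition5:
  fixes M :: "'s measure" and w :: "'s \<Rightarrow> real" and E \<epsilon> \<delta> :: real
  assumes "prob_space M"
    and "w \<in> borel_measurable M"
    and "compact (msupport (distr M borel w))"
    and "E \<in> {-2<..<2}"
    and "\<epsilon> \<noteq> 0"
    and "\<exists>a b. a \<noteq> b \<and> a \<in> msupport (distr M borel w) \<and> b \<in> msupport (distr M borel w)"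
  shows "\<forall>F :: complex option set. finite F \<and> F \<noteq> {} \<longrightarrow>
           \<not> ((\<lambda>(T, z). mob_act T z) ` (msupport (distr M borel (\<lambda>s. transfer E \<epsilon> \<delta> (w s))) \<times> F) \<subseteq> F)"
proof (intro allI impI notI)
  fix F :: "complex option set"
  assume F: "finite F \<and> F \<noteq> {}"
    and invariant: "(\<lambda>(T, z). mob_act T z) ` (msupport (distr M borel (\<lambda>s. transfer E \<epsilon> \<delta> (w s))) \<times> F) \<subseteq> F"
  obtain a b where "a \<noteq> b" and ab: "a \<in> msupport (distr M borel w)" "b \<in> msupport (distr M borel w)"
    using assms(6) by blast
  define k where "k = arccos (- E / 2)"
  have "sin k > 0"
    unfolding k_def using assms(4) arccos_lt_bounded[of "- E / 2"] by (auto intro: sin_gt_zero)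
  define q where "q = cis (- k)"
  define c where "c x = (\<i> * complex_of_real \<delta> + complex_of_real (\<epsilon> * x)) / complex_of_real (2 * sin k)" for x
  have qr: "q * cis k = 1"
    unfolding q_def by (simp add: cis_mult)
  have "mob_act (transfer E \<epsilon> \<delta> x) ` F \<subseteq> F" if "x \<in> msupport (distr M borel w)" for x
    using invariant continuous_image_msupport_distr[OF assms(2) continuous_on_transfer] that
    by (auto simp: image_subset_iff)
  moreover have "transfer E \<epsilon> \<delta> x = transfer_matrix q (cis k) (c x)" for x
    by (simp add: transfer_def Let_def diag_mult_mexp_B2_B3 q_def c_def k_def)
  ultimately have invariant_at:
    "(ext_dilate_recip_pred (q\<^sup>2) \<circ> ext_translate (- (\<i> * c x)) \<circ> ext_recip_succ) ` F \<subseteq> F"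
    if "x \<in> msupport (distr M borel w)" for x
    using that by (simp add: mob_act_transfer_matrix[OF qr])
  have "- (\<i> * c a) \<noteq> - (\<i> * c b)"
    using \<open>a \<noteq> b\<close> \<open>\<epsilon> \<noteq> 0\<close> \<open>sin k > 0\<close> by (simp add: c_def field_simps)
  moreover have "q\<^sup>2 \<noteq> 0"
    using qr by auto
  moreover have "q\<^sup>2 \<noteq> 1"
    unfolding power2_eq_1_iff using \<open>sin k > 0\<close> by (auto simp: q_def complex_eq_iff)
  ultimately show False
    using F invariant_at[OF ab(1)] invariant_at[OF ab(2)] finite_invariant_imp_dilation_eq_1
    by blast
qed

end
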